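(* Let $A$ be either quadratic or cubic (as in the context), let $(a_i),(b_i)$ be finitely supported integer sequences, neither identically zero, and $q_i=a_i-b_i$. The following are equivalent. (1) With $q_\mu$ the lowest-index and $q_\nu$ the highest-index nonzero $q_i$: (a) $a_l=0$ for $l<\mu$ and $l\ge\nu$; (b) $a_\mu=q_\mu>0$; (c) $\sum_iq_i=0$; (d) $\max(q_l,0)\le a_l<\sum_{i\le l}q_i$ for $\mu<l<\nu$; (e) if $A$ is cubic, it is not true that ($a_\mu\ge2$ and $\mu=\nu-1$). (2) With $a_\mu$ the lowest-index nonzero $a_i$ and $b_\nu$ the highest-index nonzero $b_i$, and $n=\sum_ib_i$: (a) all $a_i,b_i\ge0$; (b) $a_l=0$ for $l\ge\nu$, $b_l=0$ for $l\le\mu$; (c) $\sum_ia_i=\sum_ib_i$; (d) $\sum_{i\le l}b_i<\sum_{i<l}a_i$ for $\mu<l<\nu$; (e) if $A$ is cubic, it is not true that ($n\ge2$ and $\mu=\nu-1$). (3) With $m=\sum a_i$, $n=\sum b_i$: (a) all $a_i,b_i\ge0$; (b) $m=n$; (c) for all $1\le\alpha\le m$, $1\le\beta\le n$ with $\beta\ge\alpha-1$, $S(a)_\alpha<S(b)_\beta$; (d) if $A$ is cubic, it is not true that ($n\ge2$ and $S(b)_\beta-S(a)_\alpha=1$ for all $\alpha,\beta$).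
   Context: $A$ is a generic three-dimensional Artin–Schelter regular algebra generated in degree one, of "quadratic" type (three generators, three quadratic relations) or "cubic" type (two generators, two cubic relations); only this dichotomy matters here. For a finitely supported sequence $(c_i)$ of non-negative integers, $S(c)$ is the nondecreasing sequence of length $\sum_ic_i$, indexed from $1$, in which each integer $i$ appears exactly $c_i$ times. *)

theory Defs
  imports Main
begin

text \<open>Finitely supported integer sequences indexed by integers are modelled as
  functions int => int with finite support.\<close>

definition supp :: "(int \<Rightarrow> int) \<Rightarrow> int set" where
  "supp c = {i. c i \<noteq> 0}"

definition total :: "(int \<Rightarrow> int) \<Rightarrow> int" where
  "total c = (\<Sum>i\<in>supp c. c i)"

definition psum_le :: "(int \<Rightarrow> int) \<Rightarrow> int \<Rightarrow> int" where
  "psum_le c l = (\<Sum>i\<in>{i\<in>supp c. i \<le> l}. c i)"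

definition psum_lt :: "(int \<Rightarrow> int) \<Rightarrow> int \<Rightarrow> int" where
  "psum_lt c l = (\<Sum>i\<in>{i\<in>supp c. i < l}. c i)"

text \<open>S(c) as a list: nondecreasing, each integer i appears c i times
  (for non-negative c). The paper's S(c)_alpha (indexed from 1) is Sseq c alpha.\<close>
definition Slist :: "(int \<Rightarrow> int) \<Rightarrow> int list" where
  "Slist c = concat (map (\<lambda>i. replicate (nat (c i)) i) (sorted_list_of_set (supp c)))"

definition Sseq :: "(int \<Rightarrow> int) \<Rightarrow> nat \<Rightarrow> int" where
  "Sseq c \<alpha> = Slist c ! (\<alpha> - 1)"

definition cond1 :: "bool \<Rightarrow> (int \<Rightarrow> int) \<Rightarrow> (int \<Rightarrow> int) \<Rightarrow> bool" where
  "cond1 cubic a b = (let q = (\<lambda>i. a i - b i) in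
     supp q \<noteq> {} \<and>
     (let \<mu> = Min (supp q); \<nu> = Max (supp q) in
       (\<forall>l. (l < \<mu> \<or> l \<ge> \<nu>) \<longrightarrow> a l = 0) \<and>
       a \<mu> = q \<mu> \<and> q \<mu> > 0 \<and>
       total q = 0 \<and>
       (\<forall>l. \<mu> < l \<and> l < \<nu> \<longrightarrow> max (q l) 0 \<le> a l \<and> a l < psum_le q l) \<and>
       (cubic \<longrightarrow> \<not> (a \<mu> \<ge> 2 \<and> \<mu> = \<nu> - 1))))"

definition cond2 :: "bool \<Rightarrow> (int \<Rightarrow> int) \<Rightarrow> (int \<Rightarrow> int) \<Rightarrow> bool" where
  "cond2 cubic a b = (let \<mu> = Min (supp a); \<nu> = Max (supp b); n = total b in
     (\<forall>i. a i \<ge> 0 \<and> b i \<ge> 0) \<and>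
     (\<forall>l. l \<ge> \<nu> \<longrightarrow> a l = 0) \<and> (\<forall>l. l \<le> \<mu> \<longrightarrow> b l = 0) \<and>
     total a = total b \<and>
     (\<forall>l. \<mu> < l \<and> l < \<nu> \<longrightarrow> psum_le b l < psum_lt a l) \<and>
     (cubic \<longrightarrow> \<not> (n \<ge> 2 \<and> \<mu> = \<nu> - 1)))"

definition cond3 :: "bool \<Rightarrow> (int \<Rightarrow> int) \<Rightarrow> (int \<Rightarrow> int) \<Rightarrow> bool" where
  "cond3 cubic a b = (let m = total a; n = total b in
     (\<forall>i. a i \<ge> 0 \<and> b i \<ge> 0) \<and>
     m = n \<and>
     (\<forall>\<alpha> \<beta>::nat. 1 \<le> \<alpha> \<and> int \<alpha> \<le> m \<and> 1 \<le> \<beta> \<and> int \<beta> \<le> n \<and> \<beta> + 1 \<ge> \<alpha>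
        \<longrightarrow> Sseq a \<alpha> < Sseq b \<beta>) \<and>
     (cubic \<longrightarrow> \<not> (n \<ge> 2 \<and>
        (\<forall>\<alpha> \<beta>::nat. 1 \<le> \<alpha> \<and> int \<alpha> \<le> m \<and> 1 \<le> \<beta> \<and> int \<beta> \<le> n
           \<longrightarrow> Sseq b \<beta> - Sseq a \<alpha> = 1))))"

end

theory Submission
  imports Defs
begin

(* Write A(l), B(l), C(l), Q(l) for the partial sums up to l of a, b, c, q. Conditions (1)
   and (2) both force the same shape (bracketed \<mu> \<nu> a b): a lives on [\<mu>,\<nu>) and b on (\<mu>,\<nu>],
   with a_\<mu>, b_\<nu> > 0, where \<mu>, \<nu> are the extreme points of supp q. For (1) the point is
   that q_\<nu> < 0, because Q(\<nu>-1) > 0 = Q(\<nu>). Given this shape the clauses of (1) and (2) match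
   one by one, since Q = A - B.

   For (3), S(c)_\<alpha> \<le> l iff \<alpha> \<le> C(l). Hence (3c) says that at every point l of supp a,
   B(l) is smaller than the a-mass strictly before l, and vanishes if there is none
   (staggered a b); this is equivalent to the shape above together with (2d). Under that
   shape S(b)_\<beta> - S(a)_\<alpha> = 1 for all \<alpha>, \<beta> exactly when \<mu> = \<nu> - 1, so the cubic clauses
   agree as well. *)

section \<open>Supports and partial sums\<close>

lemma supp_eq_empty_iff: "supp c = {} \<longleftrightarrow> c = (\<lambda>_. 0)"
  by (auto simp: supp_def)

lemma finite_supp_diff:
  "finite (supp a) \<Longrightarrow> finite (supp b) \<Longrightarrow> finite (supp (\<lambda>i. a i - b i))"
  by (rule finite_subset[of _ "supp a \<union> supp b"]) (auto simp: supp_def)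

lemma less_Min_supp_eq_0:
  assumes "finite (supp c)" "l < Min (supp c)"
  shows "c l = 0"
proof (rule ccontr)
  assume "c l \<noteq> 0"
  with assms(1) have "Min (supp c) \<le> l" by (intro Min_le) (simp_all add: supp_def)
  with assms(2) show False by simp
qed

lemma Max_supp_less_eq_0:
  assumes "finite (supp c)" "Max (supp c) < l"
  shows "c l = 0"
proof (rule ccontr)
  assume "c l \<noteq> 0"
  with assms(1) have "l \<le> Max (supp c)" by (intro Max_ge) (simp_all add: supp_def)
  with assms(2) show False by simp
qed

lemma Min_supp_pos:
  assumes "finite (supp c)" "\<And>i. 0 \<le> c i" "c \<noteq> (\<lambda>_. 0)"
  shows "0 < c (Min (supp c))"
  using Min_in[OF assms(1)] assms(2,3) by (force simp: supp_def order_less_le)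

lemma Max_supp_pos:
  assumes "finite (supp c)" "\<And>i. 0 \<le> c i" "c \<noteq> (\<lambda>_. 0)"
  shows "0 < c (Max (supp c))"
  using Max_in[OF assms(1)] assms(2,3) by (force simp: supp_def order_less_le)

lemma psum_le_eq_sum_superset:
  "finite U \<Longrightarrow> supp c \<subseteq> U \<Longrightarrow> psum_le c l = (\<Sum>i\<in>{i\<in>U. i \<le> l}. c i)"
  unfolding psum_le_def by (rule sum.mono_neutral_left) (auto simp: supp_def)

lemma total_eq_sum_superset: "finite U \<Longrightarrow> supp c \<subseteq> U \<Longrightarrow> total c = (\<Sum>i\<in>U. c i)"
  unfolding total_def by (rule sum.mono_neutral_left) (auto simp: supp_def)

lemma psum_le_diff:
  assumes "finite (supp a)" "finite (supp b)"
  shows "psum_le (\<lambda>i. a i - b i) l = psum_le a l - psum_le b l"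
proof -
  let ?U = "supp a \<union> supp b"
  have "psum_le (\<lambda>i. a i - b i) l = (\<Sum>i\<in>{i\<in>?U. i \<le> l}. a i - b i)"
    using assms by (intro psum_le_eq_sum_superset) (auto simp: supp_def)
  also have "\<dots> = psum_le a l - psum_le b l"
    using assms by (simp add: sum_subtractf psum_le_eq_sum_superset[of ?U])
  finally show ?thesis .
qed

lemma total_diff:
  assumes "finite (supp a)" "finite (supp b)"
  shows "total (\<lambda>i. a i - b i) = total a - total b"
proof -
  let ?U = "supp a \<union> supp b"
  have "total (\<lambda>i. a i - b i) = (\<Sum>i\<in>?U. a i - b i)"
    using assms by (intro total_eq_sum_superset) (auto simp: supp_def)
  also have "\<dots> = total a - total b"
    using assms by (simp add: sum_subtractf total_eq_sum_superset[of ?U])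
  finally show ?thesis .
qed

lemma total_eq_single: "supp c \<subseteq> {k} \<Longrightarrow> total c = c k"
  using total_eq_sum_superset[of "{k}" c] by simp

lemma psum_le_eq_psum_lt_add:
  assumes "finite (supp c)"
  shows "psum_le c l = psum_lt c l + c l"
proof (cases "c l = 0")
  case True
  then have "{i\<in>supp c. i \<le> l} = {i\<in>supp c. i < l}"
    by (auto simp: supp_def order_le_less)
  with True show ?thesis by (simp add: psum_le_def psum_lt_def)
next
  case False
  then have "{i\<in>supp c. i \<le> l} = insert l {i\<in>supp c. i < l}"
    by (auto simp: supp_def)
  with assms show ?thesis by (simp add: psum_le_def psum_lt_def)
qed

lemma psum_lt_eq_psum_le_pred: "psum_lt c l = psum_le c (l - 1)"
  unfolding psum_lt_def psum_le_def by (rule sum.cong) auto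

lemma psum_lt_eq_if_gap:
  assumes "l \<le> k" "\<And>i. l \<le> i \<Longrightarrow> i < k \<Longrightarrow> c i = 0"
  shows "psum_lt c k = psum_lt c l"
proof -
  have "{i\<in>supp c. i < k} = {i\<in>supp c. i < l}"
    using assms by (auto simp: supp_def) (meson not_less)
  then show ?thesis by (simp add: psum_lt_def)
qed

lemma psum_le_eq_0: "(\<And>i. i \<le> l \<Longrightarrow> c i = 0) \<Longrightarrow> psum_le c l = 0"
  unfolding psum_le_def by (intro sum.neutral) auto

lemma psum_le_eq_total: "(\<And>i. l < i \<Longrightarrow> c i = 0) \<Longrightarrow> psum_le c l = total c"
  unfolding psum_le_def total_def by (rule sum.cong) (auto simp: supp_def, meson not_le)

lemma psum_le_nonneg: "(\<And>i. 0 \<le> c i) \<Longrightarrow> 0 \<le> psum_le c l"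
  unfolding psum_le_def by (rule sum_nonneg)

lemma psum_le_mono:
  "finite (supp c) \<Longrightarrow> (\<And>i. 0 \<le> c i) \<Longrightarrow> k \<le> l \<Longrightarrow> psum_le c k \<le> psum_le c l"
  unfolding psum_le_def by (intro sum_mono2) auto

lemma psum_le_le_total:
  "finite (supp c) \<Longrightarrow> (\<And>i. 0 \<le> c i) \<Longrightarrow> psum_le c l \<le> total c"
  unfolding psum_le_def total_def by (intro sum_mono2) auto

lemma le_psum_le:
  assumes "finite (supp c)" "\<And>i. 0 \<le> c i" "k \<le> l"
  shows "c k \<le> psum_le c l"
proof -
  have "c k \<le> psum_le c k"
    using assms psum_le_eq_psum_lt_add[of c k] psum_le_nonneg[of c "k - 1"]
    by (simp add: psum_lt_eq_psum_le_pred)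
  also have "\<dots> \<le> psum_le c l" using assms by (rule psum_le_mono)
  finally show ?thesis .
qed

lemma psum_le_add_le_total:
  assumes "finite (supp c)" "\<And>i. 0 \<le> c i" "l < k"
  shows "psum_le c l + c k \<le> total c"
proof -
  have "psum_le c l \<le> psum_lt c k"
    using assms by (simp add: psum_lt_eq_psum_le_pred psum_le_mono)
  also have "\<dots> + c k = psum_le c k" using assms by (simp add: psum_le_eq_psum_lt_add)
  also have "\<dots> \<le> total c" by (rule psum_le_le_total[OF assms(1,2)])
  finally show ?thesis by simp
qed

lemma total_pos:
  assumes "finite (supp c)" "\<And>i. 0 \<le> c i" "c \<noteq> (\<lambda>_. 0)"
  shows "0 < total c"
proof -
  obtain k where "c k \<noteq> 0" using assms(3) by auto
  moreover have "c k \<le> total c"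
    using le_psum_le[OF assms(1,2) order_refl] psum_le_le_total[OF assms(1,2)] order_trans by blast
  ultimately show ?thesis using assms(2)[of k] by linarith
qed

lemma Min_supp_less_Max_supp:
  assumes "finite (supp c)" "supp c \<noteq> {}" "total c = 0"
  shows "Min (supp c) < Max (supp c)"
proof (rule ccontr)
  let ?\<mu> = "Min (supp c)"
  assume "\<not> ?\<mu> < Max (supp c)"
  then have "supp c \<subseteq> {?\<mu>}" using Min_le[OF assms(1)] Max_ge[OF assms(1)] by fastforce
  then have "total c = c ?\<mu>" by (rule total_eq_single)
  moreover have "?\<mu> \<in> supp c" using Min_in[OF assms(1,2)] .
  ultimately show False using assms(3) by (simp add: supp_def)
qed

lemma total_eq_psum_le_add_Max:
  assumes "finite (supp c)"
  shows "total c = psum_le c (Max (supp c) - 1) + c (Max (supp c))"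
proof -
  let ?\<nu> = "Max (supp c)"
  have "total c = psum_le c ?\<nu>"
    using Max_supp_less_eq_0[OF assms] by (intro psum_le_eq_total[symmetric])
  also have "\<dots> = psum_le c (?\<nu> - 1) + c ?\<nu>"
    using psum_le_eq_psum_lt_add[OF assms, of ?\<nu>] psum_lt_eq_psum_le_pred[of c ?\<nu>] by simp
  finally show ?thesis .
qed

section \<open>The sequence S(c)\<close>

lemma sorted_nth_le_iff:
  "sorted xs \<Longrightarrow> k < length xs \<Longrightarrow> xs ! k \<le> l \<longleftrightarrow> k < length (filter (\<lambda>x. x \<le> l) xs)"
proof (induction xs arbitrary: k)
  case Nil
  then show ?case by simp
next
  case (Cons x xs)
  show ?case
  proof (cases "x \<le> l")
    case True
    with Cons show ?thesis by (cases k) auto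
  next
    case False
    with Cons.prems have "filter (\<lambda>x. x \<le> l) xs = []" and "x \<le> (x # xs) ! k"
      by (auto simp: filter_empty_conv nth_Cons split: nat.split)
    with False show ?thesis by auto
  qed
qed

lemma length_filter_concat_replicate:
  assumes "distinct xs" "\<And>i. 0 \<le> c i"
  shows "int (length (filter P (concat (map (\<lambda>i. replicate (nat (c i)) i) xs))))
         = (\<Sum>i\<in>{i\<in>set xs. P i}. c i)"
  using assms(1)
proof (induction xs)
  case Nil
  then show ?case by simp
next
  case (Cons x xs)
  show ?case
  proof (cases "P x")
    case True
    then have "{i\<in>set (x # xs). P i} = insert x {i\<in>set xs. P i}" by auto
    with Cons True assms(2)[of x] show ?thesis by simp
  next
    case False
    then have "{i\<in>set (x # xs). P i} = {i\<in>set xs. P i}" by auto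
    with Cons False show ?thesis by simp
  qed
qed

lemma sorted_Slist: "sorted (Slist c)"
proof -
  have "sorted (concat (map (\<lambda>i. replicate (f i) i) xs))" if "sorted xs" for f and xs :: "int list"
    using that by (induction xs) (auto simp: sorted_append)
  then show ?thesis unfolding Slist_def by simp
qed

lemma set_Slist_subset: "set (Slist c) \<subseteq> supp c"
  unfolding Slist_def by (auto simp: supp_def)

lemma length_filter_le_Slist:
  "finite (supp c) \<Longrightarrow> (\<And>i. 0 \<le> c i) \<Longrightarrow>
    int (length (filter (\<lambda>x. x \<le> l) (Slist c))) = psum_le c l"
  unfolding Slist_def psum_le_def by (simp add: length_filter_concat_replicate)

lemma length_Slist:
  "finite (supp c) \<Longrightarrow> (\<And>i. 0 \<le> c i) \<Longrightarrow> int (length (Slist c)) = total c"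
  using length_filter_concat_replicate[of "sorted_list_of_set (supp c)" c "\<lambda>_. True"]
  unfolding Slist_def total_def by simp

lemma Sseq_le_iff:
  assumes "finite (supp c)" "\<And>i. 0 \<le> c i" "1 \<le> \<alpha>" "int \<alpha> \<le> total c"
  shows "Sseq c \<alpha> \<le> l \<longleftrightarrow> int \<alpha> \<le> psum_le c l"
proof -
  have "\<alpha> - 1 < length (Slist c)" using length_Slist[OF assms(1,2)] assms(3,4) by linarith
  then have "Sseq c \<alpha> \<le> l \<longleftrightarrow> \<alpha> - 1 < length (filter (\<lambda>x. x \<le> l) (Slist c))"
    unfolding Sseq_def by (rule sorted_nth_le_iff[OF sorted_Slist])
  also have "\<dots> \<longleftrightarrow> int \<alpha> \<le> psum_le c l"
    using length_filter_le_Slist[OF assms(1,2), of l] assms(3) by linarith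
  finally show ?thesis .
qed

lemma Sseq_in_supp:
  assumes "finite (supp c)" "\<And>i. 0 \<le> c i" "1 \<le> \<alpha>" "int \<alpha> \<le> total c"
  shows "Sseq c \<alpha> \<in> supp c"
proof -
  have "\<alpha> - 1 < length (Slist c)" using length_Slist[OF assms(1,2)] assms(3,4) by linarith
  then show ?thesis unfolding Sseq_def using nth_mem set_Slist_subset by blast
qed

lemma Sseq_eq_iff:
  assumes "finite (supp c)" "\<And>i. 0 \<le> c i" "1 \<le> \<alpha>" "int \<alpha> \<le> total c"
  shows "Sseq c \<alpha> = l \<longleftrightarrow> psum_lt c l < int \<alpha> \<and> int \<alpha> \<le> psum_le c l"
  using Sseq_le_iff[OF assms, of l] Sseq_le_iff[OF assms, of "l - 1"]
  by (auto simp: psum_lt_eq_psum_le_pred)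

lemma Sseq_1_eq_Min:
  assumes "finite (supp c)" "\<And>i. 0 \<le> c i" "c \<noteq> (\<lambda>_. 0)"
  shows "Sseq c 1 = Min (supp c)"
proof -
  let ?\<mu> = "Min (supp c)"
  have "psum_lt c ?\<mu> = 0"
    using assms(1) by (simp add: psum_lt_eq_psum_le_pred psum_le_eq_0 less_Min_supp_eq_0)
  moreover have "1 \<le> psum_le c ?\<mu>"
    using le_psum_le[OF assms(1,2) order_refl, of ?\<mu>] Min_supp_pos[OF assms] by linarith
  moreover have "1 \<le> total c" using total_pos[OF assms] by simp
  ultimately show ?thesis using Sseq_eq_iff[OF assms(1,2)] by simp
qed

lemma Sseq_total_eq_Max:
  assumes "finite (supp c)" "\<And>i. 0 \<le> c i" "c \<noteq> (\<lambda>_. 0)"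
  shows "Sseq c (nat (total c)) = Max (supp c)"
proof -
  let ?\<nu> = "Max (supp c)"
  have "psum_lt c ?\<nu> < total c"
    using psum_le_add_le_total[OF assms(1,2), of "?\<nu> - 1" ?\<nu>] Max_supp_pos[OF assms]
    by (simp add: psum_lt_eq_psum_le_pred)
  moreover have "psum_le c ?\<nu> = total c"
    using assms(1) by (simp add: psum_le_eq_total Max_supp_less_eq_0)
  moreover have "1 \<le> total c" using total_pos[OF assms] by simp
  ultimately show ?thesis using Sseq_eq_iff[OF assms(1,2)] by simp
qed

section \<open>Conditions (1) and (2)\<close>

definition bracketed :: "int \<Rightarrow> int \<Rightarrow> (int \<Rightarrow> int) \<Rightarrow> (int \<Rightarrow> int) \<Rightarrow> bool" where
  "bracketed \<mu> \<nu> a b \<longleftrightarrow> 0 < a \<mu> \<and> 0 < b \<nu> \<and>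
     (\<forall>l. l < \<mu> \<or> \<nu> \<le> l \<longrightarrow> a l = 0) \<and> (\<forall>l. l \<le> \<mu> \<or> \<nu> < l \<longrightarrow> b l = 0)"

lemma bracketed_outside:
  assumes "bracketed \<mu> \<nu> a b"
  shows "l < \<mu> \<or> \<nu> \<le> l \<Longrightarrow> a l = 0" and "l \<le> \<mu> \<or> \<nu> < l \<Longrightarrow> b l = 0"
  using assms unfolding bracketed_def by blast+

lemma bracketed_supp:
  assumes "bracketed \<mu> \<nu> a b"
  shows "supp a \<subseteq> {\<mu>..<\<nu>}" and "supp b \<subseteq> {\<mu><..\<nu>}"
proof -
  have "a l = 0" if "l \<notin> {\<mu>..<\<nu>}" for l
    using that bracketed_outside(1)[OF assms, of l] by auto
  then show "supp a \<subseteq> {\<mu>..<\<nu>}" unfolding supp_def by blast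
  have "b l = 0" if "l \<notin> {\<mu><..\<nu>}" for l
    using that bracketed_outside(2)[OF assms, of l] by auto
  then show "supp b \<subseteq> {\<mu><..\<nu>}" unfolding supp_def by blast
qed

lemma bracketed_finite_supp:
  assumes "bracketed \<mu> \<nu> a b"
  shows "finite (supp a)" and "finite (supp b)"
  using bracketed_supp[OF assms] by (auto intro: finite_subset)

lemma bracketed_Min_Max:
  assumes "bracketed \<mu> \<nu> a b"
  shows "Min (supp a) = \<mu>" and "Max (supp b) = \<nu>"
    and "Min (supp (\<lambda>i. a i - b i)) = \<mu>" and "Max (supp (\<lambda>i. a i - b i)) = \<nu>"
proof -
  note fin = bracketed_finite_supp[OF assms]
  note sub = bracketed_supp[OF assms]
  have in_supp: "\<mu> \<in> supp a" "\<nu> \<in> supp b" "\<mu> \<in> supp (\<lambda>i. a i - b i)" "\<nu> \<in> supp (\<lambda>i. a i - b i)"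
    using assms bracketed_outside[OF assms, of \<mu>] bracketed_outside[OF assms, of \<nu>]
    by (auto simp: bracketed_def supp_def)
  have "a l - b l = 0" if "l \<notin> {\<mu>..\<nu>}" for l
    using that bracketed_outside[OF assms, of l] by auto
  then have "supp (\<lambda>i. a i - b i) \<subseteq> {\<mu>..\<nu>}" unfolding supp_def by blast
  with sub in_supp fin finite_supp_diff[OF fin]
  show "Min (supp a) = \<mu>" "Max (supp b) = \<nu>"
    "Min (supp (\<lambda>i. a i - b i)) = \<mu>" "Max (supp (\<lambda>i. a i - b i)) = \<nu>"
    by (auto intro!: Min_eqI Max_eqI)
qed

lemma bracketed_total_eq:
  assumes "bracketed \<mu> \<nu> a b" "\<mu> = \<nu> - 1"
  shows "total a = a \<mu>"
  using bracketed_supp(1)[OF assms(1)] assms(2) by (intro total_eq_single) auto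

lemma bracketed_cond1_iff_cond2:
  assumes br: "bracketed \<mu> \<nu> a b"
  shows "cond1 cubic a b \<longleftrightarrow> cond2 cubic a b"
proof -
  define q where "q = (\<lambda>i. a i - b i)"
  note fin = bracketed_finite_supp[OF br]
  note Min_Max = bracketed_Min_Max[OF br, folded q_def]
  note a_out = bracketed_outside(1)[OF br] and b_out = bracketed_outside(2)[OF br]
  have pos: "0 < a \<mu>" "0 < b \<nu>" using br by (simp_all add: bracketed_def)
  have nonneg_iff: "(\<forall>i. 0 \<le> a i \<and> 0 \<le> b i) \<longleftrightarrow> (\<forall>l. \<mu> < l \<and> l < \<nu> \<longrightarrow> 0 \<le> a l \<and> 0 \<le> b l)"
  proof -
    have "0 \<le> a i \<and> 0 \<le> b i" if "\<not> (\<mu> < i \<and> i < \<nu>)" for i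
      using that a_out[of i] b_out[of i] pos by (cases "i = \<mu>"; cases "i = \<nu>") auto
    then show ?thesis by blast
  qed
  have total_q: "total q = total a - total b"
    unfolding q_def using fin by (rule total_diff)
  have middle: "max (q l) 0 \<le> a l \<and> a l < psum_le q l \<longleftrightarrow>
      (0 \<le> a l \<and> 0 \<le> b l) \<and> psum_le b l < psum_lt a l" for l
    using psum_le_diff[OF fin, of l] psum_le_eq_psum_lt_add[OF fin(1), of l]
    unfolding q_def by auto
  have cubic_iff: "a \<mu> \<ge> 2 \<and> \<mu> = \<nu> - 1 \<longleftrightarrow> total b \<ge> 2 \<and> \<mu> = \<nu> - 1" if "total a = total b"
    using that bracketed_total_eq[OF br] by auto
  have "\<mu> \<in> supp q" using pos b_out[of \<mu>] by (simp add: supp_def q_def)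
  then have "supp q \<noteq> {}" by blast
  then have cond1_iff: "cond1 cubic a b \<longleftrightarrow> total a = total b \<and>
      (\<forall>l. \<mu> < l \<and> l < \<nu> \<longrightarrow> max (q l) 0 \<le> a l \<and> a l < psum_le q l) \<and>
      (cubic \<longrightarrow> \<not> (a \<mu> \<ge> 2 \<and> \<mu> = \<nu> - 1))"
    unfolding cond1_def Let_def q_def[symmetric] Min_Max
    using a_out b_out pos total_q by (auto simp: q_def)
  have cond2_iff: "cond2 cubic a b \<longleftrightarrow> (\<forall>i. 0 \<le> a i \<and> 0 \<le> b i) \<and> total a = total b \<and>
      (\<forall>l. \<mu> < l \<and> l < \<nu> \<longrightarrow> psum_le b l < psum_lt a l) \<and>
      (cubic \<longrightarrow> \<not> (total b \<ge> 2 \<and> \<mu> = \<nu> - 1))"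
    unfolding cond2_def Let_def Min_Max using a_out b_out by auto
  show ?thesis
    unfolding cond1_iff cond2_iff nonneg_iff using middle cubic_iff by blast
qed

lemma cond1_bracketed:
  assumes fin: "finite (supp a)" "finite (supp b)" and c1: "cond1 cubic a b"
  shows "bracketed (Min (supp (\<lambda>i. a i - b i))) (Max (supp (\<lambda>i. a i - b i))) a b"
proof -
  define q where "q = (\<lambda>i. a i - b i)"
  define \<mu> where "\<mu> = Min (supp q)"
  define \<nu> where "\<nu> = Max (supp q)"
  have fin_q: "finite (supp q)" unfolding q_def using fin by (rule finite_supp_diff)
  have ne: "supp q \<noteq> {}"
    and a_out: "\<And>l. l < \<mu> \<or> \<nu> \<le> l \<Longrightarrow> a l = 0"
    and q_\<mu>: "a \<mu> = q \<mu>" "0 < q \<mu>" and total_q: "total q = 0"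
    and middle: "\<And>l. \<mu> < l \<Longrightarrow> l < \<nu> \<Longrightarrow> max (q l) 0 \<le> a l \<and> a l < psum_le q l"
    using c1 unfolding cond1_def Let_def q_def[symmetric] \<mu>_def[symmetric] \<nu>_def[symmetric]
    by auto
  have q_out: "q l = 0" if "l < \<mu> \<or> \<nu> < l" for l
    using that fin_q less_Min_supp_eq_0 Max_supp_less_eq_0 unfolding \<mu>_def \<nu>_def by blast
  have "\<mu> < \<nu>" unfolding \<mu>_def \<nu>_def using fin_q ne total_q by (rule Min_supp_less_Max_supp)
  have "0 < psum_le q (\<nu> - 1)"
  proof (cases "\<nu> - 1 = \<mu>")
    case True
    have "psum_lt q \<mu> = 0"
      using q_out by (simp add: psum_lt_eq_psum_le_pred psum_le_eq_0)
    with True q_\<mu> show ?thesis by (simp add: psum_le_eq_psum_lt_add[OF fin_q])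
  next
    case False
    with \<open>\<mu> < \<nu>\<close> middle[of "\<nu> - 1"] show ?thesis by auto
  qed
  with total_q total_eq_psum_le_add_Max[OF fin_q] have "q \<nu> < 0" unfolding \<nu>_def by simp
  moreover have "b l = a l - q l" for l unfolding q_def by simp
  moreover have "q l = a l" if "l \<le> \<mu>" for l
    using that q_out a_out q_\<mu> by (cases "l = \<mu>") auto
  ultimately show ?thesis
    unfolding bracketed_def \<mu>_def[symmetric] \<nu>_def[symmetric] q_def[symmetric]
    using a_out q_out q_\<mu> by auto
qed

lemma bracketed_Min_Max_iff:
  assumes "finite (supp a)" "finite (supp b)" "\<And>i. 0 \<le> a i" "\<And>i. 0 \<le> b i"
    "a \<noteq> (\<lambda>_. 0)" "b \<noteq> (\<lambda>_. 0)"
  shows "bracketed (Min (supp a)) (Max (supp b)) a b \<longleftrightarrow>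
    (\<forall>l. Max (supp b) \<le> l \<longrightarrow> a l = 0) \<and> (\<forall>l. l \<le> Min (supp a) \<longrightarrow> b l = 0)"
  using Min_supp_pos[of a] Max_supp_pos[of b] less_Min_supp_eq_0[of a] Max_supp_less_eq_0[of b] assms
  unfolding bracketed_def by blast

lemma cond1_iff_cond2:
  assumes fin: "finite (supp a)" "finite (supp b)" and nz: "a \<noteq> (\<lambda>_. 0)" "b \<noteq> (\<lambda>_. 0)"
  shows "cond1 cubic a b \<longleftrightarrow> cond2 cubic a b"
proof
  assume "cond1 cubic a b"
  with cond1_bracketed[OF fin] bracketed_cond1_iff_cond2 show "cond2 cubic a b" by blast
next
  assume c2: "cond2 cubic a b"
  then have "bracketed (Min (supp a)) (Max (supp b)) a b"
    using bracketed_Min_Max_iff[OF fin _ _ nz] by (simp add: cond2_def Let_def)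
  with c2 bracketed_cond1_iff_cond2 show "cond1 cubic a b" by blast
qed

section \<open>Condition (3)\<close>

definition staggered :: "(int \<Rightarrow> int) \<Rightarrow> (int \<Rightarrow> int) \<Rightarrow> bool" where
  "staggered a b \<longleftrightarrow> (\<forall>l\<in>supp a. psum_le b l < max 1 (psum_lt a l))"

lemma Sseq_less_imp_staggered:
  assumes fin: "finite (supp a)" "finite (supp b)" and nonneg: "\<And>i. 0 \<le> a i" "\<And>i. 0 \<le> b i"
    and tot: "total a = total b"
    and less: "\<forall>\<alpha> \<beta>::nat. 1 \<le> \<alpha> \<and> int \<alpha> \<le> total a \<and> 1 \<le> \<beta> \<and> int \<beta> \<le> total b \<and> \<beta> + 1 \<ge> \<alpha>
            \<longrightarrow> Sseq a \<alpha> < Sseq b \<beta>"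
  shows "staggered a b"
  unfolding staggered_def
proof
  fix l assume "l \<in> supp a"
  define \<alpha> where "\<alpha> = nat (psum_lt a l) + 1"
  define \<beta> where "\<beta> = max 1 (nat (psum_lt a l))"
  have "0 \<le> psum_lt a l" using psum_le_nonneg nonneg by (simp add: psum_lt_eq_psum_le_pred)
  moreover have "0 < a l" using \<open>l \<in> supp a\<close> nonneg(1)[of l] by (simp add: supp_def)
  moreover have "psum_le a l = psum_lt a l + a l" by (rule psum_le_eq_psum_lt_add[OF fin(1)])
  moreover have "psum_le a l \<le> total a" by (rule psum_le_le_total[OF fin(1) nonneg(1)])
  ultimately have range: "1 \<le> \<alpha>" "int \<alpha> \<le> total a" "1 \<le> \<beta>" "int \<beta> \<le> total b" "\<alpha> \<le> \<beta> + 1"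
    and "psum_lt a l < int \<alpha> \<and> int \<alpha> \<le> psum_le a l"
    unfolding \<alpha>_def \<beta>_def using tot by auto
  then have "Sseq a \<alpha> = l" by (simp add: Sseq_eq_iff[OF fin(1) nonneg(1)])
  with less range have "l < Sseq b \<beta>" by auto
  then have "psum_le b l < int \<beta>" using Sseq_le_iff[OF fin(2) nonneg(2) range(3,4), of l] by simp
  with \<open>0 \<le> psum_lt a l\<close> show "psum_le b l < max 1 (psum_lt a l)" unfolding \<beta>_def by simp
qed

lemma staggered_imp_Sseq_less:
  assumes fin: "finite (supp a)" "finite (supp b)" and nonneg: "\<And>i. 0 \<le> a i" "\<And>i. 0 \<le> b i"
    and stag: "staggered a b"
  shows "\<forall>\<alpha> \<beta>::nat. 1 \<le> \<alpha> \<and> int \<alpha> \<le> total a \<and> 1 \<le> \<beta> \<and> int \<beta> \<le> total b \<and> \<beta> + 1 \<ge> \<alpha>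
            \<longrightarrow> Sseq a \<alpha> < Sseq b \<beta>"
proof (intro allI impI)
  fix \<alpha> \<beta> :: nat
  assume "1 \<le> \<alpha> \<and> int \<alpha> \<le> total a \<and> 1 \<le> \<beta> \<and> int \<beta> \<le> total b \<and> \<beta> + 1 \<ge> \<alpha>"
  then have range: "1 \<le> \<alpha>" "int \<alpha> \<le> total a" "1 \<le> \<beta>" "int \<beta> \<le> total b" "\<alpha> \<le> \<beta> + 1"
    by auto
  define l where "l = Sseq a \<alpha>"
  have "l \<in> supp a" unfolding l_def by (rule Sseq_in_supp[OF fin(1) nonneg(1) range(1,2)])
  moreover have "psum_lt a l < int \<alpha>"
    using Sseq_eq_iff[OF fin(1) nonneg(1) range(1,2), of l] unfolding l_def by simp
  ultimately have "psum_le b l < int \<beta>"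
    using stag range(3,5) unfolding staggered_def by fastforce
  then show "Sseq a \<alpha> < Sseq b \<beta>"
    using Sseq_le_iff[OF fin(2) nonneg(2) range(3,4), of l] l_def by simp
qed

lemma staggered_psum_le_less_psum_lt:
  assumes fin: "finite (supp a)" "finite (supp b)" and nonneg: "\<And>i. 0 \<le> a i" "\<And>i. 0 \<le> b i"
    and nz: "a \<noteq> (\<lambda>_. 0)" "b \<noteq> (\<lambda>_. 0)" and tot: "total a = total b" and stag: "staggered a b"
    and l: "Min (supp a) < l" "l < Max (supp b)"
  shows "psum_le b l < psum_lt a l"
proof (cases "\<exists>k\<in>supp a. l \<le> k")
  case True
  define k where "k = Min {k\<in>supp a. l \<le> k}"
  have fin_k: "finite {k\<in>supp a. l \<le> k}" using fin(1) by simp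
  have k: "k \<in> supp a" "l \<le> k" using Min_in[OF fin_k] True unfolding k_def by auto
  have gap: "a i = 0" if "l \<le> i" "i < k" for i
    using that Min_le[OF fin_k, of i] unfolding k_def supp_def by force
  have "1 \<le> psum_lt a l"
    using le_psum_le[OF fin(1) nonneg(1), of "Min (supp a)" "l - 1"] Min_supp_pos[OF fin(1) nonneg(1) nz(1)] l(1)
    by (simp add: psum_lt_eq_psum_le_pred)
  have "psum_le b l \<le> psum_le b k" by (rule psum_le_mono[OF fin(2) nonneg(2) k(2)])
  also have "\<dots> < max 1 (psum_lt a k)" using stag k(1) unfolding staggered_def by blast
  also have "\<dots> = psum_lt a l"
    using \<open>1 \<le> psum_lt a l\<close> psum_lt_eq_if_gap[OF k(2) gap] by simp
  finally show ?thesis .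
next
  case False
  then have "psum_lt a l = total a"
    unfolding psum_lt_eq_psum_le_pred by (intro psum_le_eq_total) (auto simp: supp_def)
  moreover have "psum_le b l + b (Max (supp b)) \<le> total b"
    by (rule psum_le_add_le_total[OF fin(2) nonneg(2) l(2)])
  moreover have "0 < b (Max (supp b))" by (rule Max_supp_pos[OF fin(2) nonneg(2) nz(2)])
  ultimately show ?thesis using tot by simp
qed

lemma staggered_imp_bracketed:
  assumes fin: "finite (supp a)" "finite (supp b)" and nonneg: "\<And>i. 0 \<le> a i" "\<And>i. 0 \<le> b i"
    and nz: "a \<noteq> (\<lambda>_. 0)" "b \<noteq> (\<lambda>_. 0)" and tot: "total a = total b" and stag: "staggered a b"
  shows "bracketed (Min (supp a)) (Max (supp b)) a b"
proof -
  define \<mu> where "\<mu> = Min (supp a)"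
  define \<nu> where "\<nu> = Max (supp b)"
  have "b l = 0" if "l \<le> \<mu>" for l
  proof -
    have "psum_lt a \<mu> = 0"
      using fin(1) unfolding \<mu>_def
      by (simp add: psum_lt_eq_psum_le_pred psum_le_eq_0 less_Min_supp_eq_0)
    moreover have "\<mu> \<in> supp a" using Min_in fin(1) nz(1) by (simp add: \<mu>_def supp_eq_empty_iff)
    ultimately have "psum_le b \<mu> < 1" using stag unfolding staggered_def by force
    with le_psum_le[OF fin(2) nonneg(2) that] nonneg(2)[of l] show ?thesis by simp
  qed
  moreover have "a l = 0" if "\<nu> \<le> l" for l
  proof (rule ccontr)
    assume "a l \<noteq> 0"
    then have "l \<in> supp a" and "0 < a l" using nonneg(1)[of l] by (simp_all add: supp_def)
    have "psum_le b l = total b"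
      using that fin(2) unfolding \<nu>_def by (intro psum_le_eq_total) (simp add: Max_supp_less_eq_0)
    moreover have "psum_lt a l + a l \<le> total a"
      using psum_le_eq_psum_lt_add[OF fin(1), of l] psum_le_le_total[OF fin(1) nonneg(1), of l]
      by simp
    moreover have "0 < total b" by (rule total_pos[OF fin(2) nonneg(2) nz(2)])
    ultimately have "max 1 (psum_lt a l) \<le> psum_le b l" using tot \<open>0 < a l\<close> by simp
    with stag \<open>l \<in> supp a\<close> show False unfolding staggered_def by force
  qed
  ultimately show ?thesis
    using bracketed_Min_Max_iff[OF fin nonneg nz] unfolding \<mu>_def \<nu>_def by blast
qed

lemma staggered_iff_bracketed:
  assumes fin: "finite (supp a)" "finite (supp b)" and nonneg: "\<And>i. 0 \<le> a i" "\<And>i. 0 \<le> b i"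
    and nz: "a \<noteq> (\<lambda>_. 0)" "b \<noteq> (\<lambda>_. 0)" and tot: "total a = total b"
  shows "staggered a b \<longleftrightarrow> bracketed (Min (supp a)) (Max (supp b)) a b \<and>
    (\<forall>l. Min (supp a) < l \<and> l < Max (supp b) \<longrightarrow> psum_le b l < psum_lt a l)"
proof
  assume "staggered a b"
  with staggered_imp_bracketed[OF assms] staggered_psum_le_less_psum_lt[OF assms]
  show "bracketed (Min (supp a)) (Max (supp b)) a b \<and>
    (\<forall>l. Min (supp a) < l \<and> l < Max (supp b) \<longrightarrow> psum_le b l < psum_lt a l)"
    by blast
next
  let ?\<mu> = "Min (supp a)" and ?\<nu> = "Max (supp b)"
  assume "bracketed ?\<mu> ?\<nu> a b \<and> (\<forall>l. ?\<mu> < l \<and> l < ?\<nu> \<longrightarrow> psum_le b l < psum_lt a l)"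
  then have br: "bracketed ?\<mu> ?\<nu> a b"
    and between: "\<And>l. ?\<mu> < l \<Longrightarrow> l < ?\<nu> \<Longrightarrow> psum_le b l < psum_lt a l" by auto
  show "staggered a b" unfolding staggered_def
  proof
    fix l assume "l \<in> supp a"
    then have "?\<mu> \<le> l" "l < ?\<nu>" using bracketed_supp(1)[OF br] by auto
    show "psum_le b l < max 1 (psum_lt a l)"
    proof (cases "l = ?\<mu>")
      case True
      then have "psum_le b l = 0" using bracketed_outside(2)[OF br] by (intro psum_le_eq_0) auto
      then show ?thesis by simp
    next
      case False
      with \<open>?\<mu> \<le> l\<close> \<open>l < ?\<nu>\<close> between[of l] show ?thesis by simp
    qed
  qed
qed

lemma bracketed_Sseq_diff_eq_1_iff:
  assumes br: "bracketed \<mu> \<nu> a b" and nonneg: "\<And>i. 0 \<le> a i" "\<And>i. 0 \<le> b i"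
  shows "(\<forall>\<alpha> \<beta>::nat. 1 \<le> \<alpha> \<and> int \<alpha> \<le> total a \<and> 1 \<le> \<beta> \<and> int \<beta> \<le> total b
           \<longrightarrow> Sseq b \<beta> - Sseq a \<alpha> = 1) \<longleftrightarrow> \<mu> = \<nu> - 1"
proof -
  note fin = bracketed_finite_supp[OF br]
  have nz: "a \<noteq> (\<lambda>_. 0)" "b \<noteq> (\<lambda>_. 0)" using br by (auto simp: bracketed_def)
  have "0 < total a" "0 < total b"
    using total_pos[OF fin(1) nonneg(1) nz(1)] total_pos[OF fin(2) nonneg(2) nz(2)] by simp_all
  show ?thesis
  proof
    assume "\<forall>\<alpha> \<beta>::nat. 1 \<le> \<alpha> \<and> int \<alpha> \<le> total a \<and> 1 \<le> \<beta> \<and> int \<beta> \<le> total b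
           \<longrightarrow> Sseq b \<beta> - Sseq a \<alpha> = 1"
    with \<open>0 < total a\<close> \<open>0 < total b\<close> have "Sseq b (nat (total b)) - Sseq a 1 = 1" by simp
    then show "\<mu> = \<nu> - 1"
      using Sseq_1_eq_Min[OF fin(1) nonneg(1) nz(1)] Sseq_total_eq_Max[OF fin(2) nonneg(2) nz(2)]
        bracketed_Min_Max[OF br] by simp
  next
    assume "\<mu> = \<nu> - 1"
    then have "supp a \<subseteq> {\<mu>}" "supp b \<subseteq> {\<nu>}" using bracketed_supp[OF br] by auto
    with \<open>\<mu> = \<nu> - 1\<close> Sseq_in_supp[OF fin(1) nonneg(1)] Sseq_in_supp[OF fin(2) nonneg(2)]
    show "\<forall>\<alpha> \<beta>::nat. 1 \<le> \<alpha> \<and> int \<alpha> \<le> total a \<and> 1 \<le> \<beta> \<and> int \<beta> \<le> total b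
           \<longrightarrow> Sseq b \<beta> - Sseq a \<alpha> = 1" by fastforce
  qed
qed

lemma cond2_iff_cond3:
  assumes fin: "finite (supp a)" "finite (supp b)" and nz: "a \<noteq> (\<lambda>_. 0)" "b \<noteq> (\<lambda>_. 0)"
  shows "cond2 cubic a b \<longleftrightarrow> cond3 cubic a b"
proof
  let ?\<mu> = "Min (supp a)" and ?\<nu> = "Max (supp b)"
  assume c2: "cond2 cubic a b"
  then have nonneg: "\<And>i. 0 \<le> a i" "\<And>i. 0 \<le> b i" and tot: "total a = total b"
    by (simp_all add: cond2_def Let_def)
  from c2 have br: "bracketed ?\<mu> ?\<nu> a b"
    using bracketed_Min_Max_iff[OF fin nonneg nz] by (simp add: cond2_def Let_def)
  with c2 have "staggered a b"
    using staggered_iff_bracketed[OF fin nonneg nz tot] by (simp add: cond2_def Let_def)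
  with c2 show "cond3 cubic a b"
    unfolding cond3_def Let_def
    using staggered_imp_Sseq_less[OF fin nonneg] bracketed_Sseq_diff_eq_1_iff[OF br nonneg]
    by (simp add: cond2_def Let_def)
next
  let ?\<mu> = "Min (supp a)" and ?\<nu> = "Max (supp b)"
  assume c3: "cond3 cubic a b"
  then have nonneg: "\<And>i. 0 \<le> a i" "\<And>i. 0 \<le> b i" and tot: "total a = total b"
    by (simp_all add: cond3_def Let_def)
  from c3 have "staggered a b"
    using Sseq_less_imp_staggered[OF fin nonneg tot] by (simp add: cond3_def Let_def)
  then have br: "bracketed ?\<mu> ?\<nu> a b"
    and between: "\<forall>l. ?\<mu> < l \<and> l < ?\<nu> \<longrightarrow> psum_le b l < psum_lt a l"
    using staggered_iff_bracketed[OF fin nonneg nz tot] by simp_all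
  moreover from c3 have "cubic \<longrightarrow> \<not> (2 \<le> total b \<and> ?\<mu> = ?\<nu> - 1)"
    unfolding cond3_def Let_def bracketed_Sseq_diff_eq_1_iff[OF br nonneg] by blast
  ultimately show "cond2 cubic a b"
    unfolding cond2_def Let_def using nonneg tot bracketed_outside[OF br] by auto
qed

theorem mainTheorem15:
  fixes cubic :: bool and a b :: "int \<Rightarrow> int"
  assumes "finite (supp a)" and "finite (supp b)"
    and "a \<noteq> (\<lambda>_. 0)" and "b \<noteq> (\<lambda>_. 0)"
  shows "(cond1 cubic a b \<longleftrightarrow> cond2 cubic a b) \<and> (cond2 cubic a b \<longleftrightarrow> cond3 cubic a b)"
  using cond1_iff_cond2[OF assms] cond2_iff_cond3[OF assms] by blast

end
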